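(* If $A=(A_n)_{n=0}^\infty$ is an Appell sequence, then (a) the sequence $A^*=(A^*_n)_{n=0}^\infty$ defined by $A^*_n=A_{(1^n)}$ is also an Appell sequence; (b) the Wronskian Appell polynomials for $A$ and $A^*$ satisfy $A^*_\lambda=A_{\lambda'}$ for all partitions $\lambda$, where $\lambda'$ is the conjugate partition; (c) the exponential generating functions satisfy $f_{A^*}(t)=1/f_A(-t)$, or equivalently, $\log f_A(t)=\sum_{k=1}^\infty c_k\frac{t^k}{k!}$ implies $\log f_{A^*}(t)=\sum_{k=1}^\infty (-1)^{k-1}c_k\frac{t^k}{k!}$.
   Context: An Appell sequence is a sequence of polynomials $(A_n)_{n\ge0}$ with $A_0=1$ and $A_n'=nA_{n-1}$ for $n\ge1$; it satisfies $\sum_k A_k(x)t^k/k!=e^{xt}f_A(t)$ for a formal power series $f_A$ with $f_A(0)=1$. For a partition $\lambda$ of length $r$, let $(n_1,\dots,n_r)=(\lambda_r,\lambda_{r-1}+1,\dots,\lambda_1+r-1)$ and $A_\lambda=\operatorname{Wr}[A_{n_1},\dots,A_{n_r}]/\Delta(n_1,\dots,n_r)$, where $\operatorname{Wr}$ is the Wronskian and $\Delta$ the Vandermonde determinant $\prod_{i<j}(x_j-x_i)$. $(1^n)=(1,\dots,1)$ ($n$ ones). *)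

theory Defs
  imports "HOL-Computational_Algebra.Polynomial" "HOL-Computational_Algebra.Formal_Power_Series"
    "Jordan_Normal_Form.Determinant"
begin

definition appell :: "(nat \<Rightarrow> 'a::field_char_0 poly) \<Rightarrow> bool" where
  "appell A \<longleftrightarrow> A 0 = 1 \<and> (\<forall>n\<ge>1. pderiv (A n) = smult (of_nat n) (A (n - 1)))"

text \<open>f is the series f_A: sum_k A_k(x) t^k/k! = e^{xt} f(t), as formal power series in t
  with polynomial coefficients in x.\<close>
definition appell_egf :: "(nat \<Rightarrow> 'a::field_char_0 poly) \<Rightarrow> 'a fps \<Rightarrow> bool" where
  "appell_egf A f \<longleftrightarrow> fps_nth f 0 = 1 \<and>
     Abs_fps (\<lambda>k. smult (inverse (fact k)) (A k)) =
     Abs_fps (\<lambda>k. monom (inverse (fact k)) k) * Abs_fps (\<lambda>k. [:fps_nth f k:])"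

definition is_partition :: "nat list \<Rightarrow> bool" where
  "is_partition lam \<longleftrightarrow> sorted_wrt (\<ge>) lam \<and> 0 \<notin> set lam"

definition conj_partition :: "nat list \<Rightarrow> nat list" where
  "conj_partition lam = map (\<lambda>j. length (filter (\<lambda>x. j \<le> x) lam)) [1..<Suc (fold max lam 0)]"

text \<open>(n_1,...,n_r) = (lam_r, lam_{r-1}+1, ..., lam_1 + r - 1), 0-indexed\<close>
definition part_seq :: "nat list \<Rightarrow> nat \<Rightarrow> nat" where
  "part_seq lam i = lam ! (length lam - 1 - i) + i"

definition wronskian :: "nat \<Rightarrow> (nat \<Rightarrow> 'a::idom poly) \<Rightarrow> 'a poly" where
  "wronskian r f = det (mat r r (\<lambda>(i, j). (pderiv ^^ i) (f j)))"

definition vandermonde :: "nat \<Rightarrow> (nat \<Rightarrow> nat) \<Rightarrow> int" where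
  "vandermonde r n = (\<Prod>j<r. \<Prod>i<j. int (n j) - int (n i))"

definition wronskian_appell :: "(nat \<Rightarrow> 'a::field_char_0 poly) \<Rightarrow> nat list \<Rightarrow> 'a poly" where
  "wronskian_appell A lam =
     smult (inverse (of_int (vandermonde (length lam) (part_seq lam))))
       (wronskian (length lam) (\<lambda>j. A (part_seq lam j)))"

definition appell_dual :: "(nat \<Rightarrow> 'a::field_char_0 poly) \<Rightarrow> nat \<Rightarrow> 'a poly" where
  "appell_dual A n = wronskian_appell A (replicate n 1)"

end

theory Submission
  imports Defs
begin

(*
  With b k = A k / k!, the Appell property turns Wr[A (n 1), ..., A (n r)] into
  (prod_j (n j)!) * det (b (n j - i)), a minor of the Toeplitz matrix of b.
  Define A* by sum_k A*_k t^k/k! = 1 / sum_k A_k (-t)^k/k!; differentiating in x shows that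
  it is again Appell. The Toeplitz matrices of (-1)^k b k and of b* are mutually inverse,
  so Jacobi's complementary minor theorem yields the dual Jacobi-Trudi identity: the minor
  of b* for lam equals the minor of b for lam' times a constant depending only on lam.
  Hence A*_lam = c_lam A_lam', and the self-dual sequence x^n, for which A_lam = x^|lam| by
  the Vandermonde determinant, forces c_lam = 1. For lam = (n) this identifies A* with the
  sequence A_(1^n), and (c) is the defining series identity at x = 0.
*)

section \<open>Determinant identities\<close>

lemma det_permute_cols:
  assumes A: "A \<in> carrier_mat n n" and p: "p permutes {0..<n}"
  shows "det (mat n n (\<lambda>(i,j). A $$ (i, p j))) = signof p * det A"
proof -
  have "mat n n (\<lambda>(i,j). A $$ (i, p j)) =
      transpose_mat (mat n n (\<lambda>(i,j). transpose_mat A $$ (p i, j)))"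
    using A p by (auto intro!: eq_matI simp: permutes_in_image)
  then have "det (mat n n (\<lambda>(i,j). A $$ (i, p j))) =
      det (transpose_mat (mat n n (\<lambda>(i,j). transpose_mat A $$ (p i, j))))"
    by (simp only:)
  also have "\<dots> = det (mat n n (\<lambda>(i,j). transpose_mat A $$ (p i, j)))"
    by (rule det_transpose[of _ n]) simp
  also have "\<dots> = signof p * det (transpose_mat A)"
    by (rule det_permute_rows[OF _ p]) (use A in auto)
  finally show ?thesis using A by (simp add: det_transpose)
qed

lemma det_scale_rows_cols:
  fixes A :: "'b::comm_ring_1 mat"
  assumes A: "A \<in> carrier_mat n n"
  shows "det (mat n n (\<lambda>(i,j). u i * v j * A $$ (i,j))) = (\<Prod>i<n. u i) * (\<Prod>j<n. v j) * det A"
proof -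
  have "det (mat n n (\<lambda>(i,j). u i * v j * A $$ (i,j))) =
      (\<Sum>p\<in>{p. p permutes {0..<n}}. signof p * (\<Prod>i=0..<n. u i * v (p i) * A $$ (i, p i)))"
    by (subst det_def'[of _ n]) (auto intro!: sum.cong prod.cong)
  also have "\<dots> = (\<Sum>p\<in>{p. p permutes {0..<n}}.
      (\<Prod>i<n. u i) * (\<Prod>j<n. v j) * (signof p * (\<Prod>i=0..<n. A $$ (i, p i))))"
  proof (rule sum.cong)
    fix p assume "p \<in> {p. p permutes {0..<n}}"
    then have "(\<Prod>i=0..<n. v (p i)) = (\<Prod>j=0..<n. v j)"
      using prod.permute[of p "{0..<n}" v] by (simp add: comp_def)
    then show "signof p * (\<Prod>i=0..<n. u i * v (p i) * A $$ (i, p i)) =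
        (\<Prod>i<n. u i) * (\<Prod>j<n. v j) * (signof p * (\<Prod>i=0..<n. A $$ (i, p i)))"
      by (simp add: prod.distrib atLeast0LessThan)
  qed simp
  also have "\<dots> = (\<Prod>i<n. u i) * (\<Prod>j<n. v j) * det A"
    by (simp add: det_def'[OF A] sum_distrib_left)
  finally show ?thesis .
qed

lemma det_upper_left_block_of_inverse:
  fixes P Q :: "'b::idom mat"
  assumes P: "P \<in> carrier_mat (r + m) (r + m)" and Q: "Q \<in> carrier_mat (r + m) (r + m)"
    and PQ: "P * Q = 1\<^sub>m (r + m)"
  shows "det (mat r r (\<lambda>(i,j). P $$ (i,j))) = det P * det (mat m m (\<lambda>(i,j). Q $$ (r + i, r + j)))"
proof -
  let ?N = "r + m"
  define R where "R = mat ?N ?N (\<lambda>(i,j). if j < r then (if i = j then 1 else 0) else Q $$ (i,j))"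
  have PR: "P * R = mat ?N ?N (\<lambda>(i,j). if j < r then P $$ (i,j) else (if i = j then 1 else 0))"
  proof (rule eq_matI)
    fix i j assume "i < dim_row (mat ?N ?N (\<lambda>(i,j). if j < r then P $$ (i,j) else (if i = j then 1 else 0)))"
      and "j < dim_col (mat ?N ?N (\<lambda>(i,j). if j < r then P $$ (i,j) else (if i = j then 1 else 0)))"
    then have i: "i < ?N" and j: "j < ?N" by simp_all
    have PR_ij: "(P * R) $$ (i,j) = (\<Sum>k=0..<?N. P $$ (i,k) * R $$ (k,j))"
      using P i j by (simp add: R_def scalar_prod_def)
    show "(P * R) $$ (i,j) =
        mat ?N ?N (\<lambda>(i,j). if j < r then P $$ (i,j) else (if i = j then 1 else 0)) $$ (i,j)"
    proof (cases "j < r")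
      case True
      have "(\<Sum>k=0..<?N. P $$ (i,k) * R $$ (k,j)) = (\<Sum>k=0..<?N. if k = j then P $$ (i,j) else 0)"
        by (rule sum.cong) (use True j in \<open>auto simp: R_def\<close>)
      then show ?thesis using PR_ij i j True by simp
    next
      case False
      have "(\<Sum>k=0..<?N. P $$ (i,k) * R $$ (k,j)) = (\<Sum>k=0..<?N. P $$ (i,k) * Q $$ (k,j))"
        by (rule sum.cong) (use False j in \<open>auto simp: R_def\<close>)
      also have "\<dots> = (P * Q) $$ (i,j)" using P Q i j by (simp add: scalar_prod_def)
      finally show ?thesis using PR_ij PQ i j False by simp
    qed
  qed (use P in \<open>simp_all add: R_def\<close>)
  have "R = four_block_mat (1\<^sub>m r) (mat r m (\<lambda>(i,j). Q $$ (i, r + j))) (0\<^sub>m m r)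
      (mat m m (\<lambda>(i,j). Q $$ (r + i, r + j)))"
    by (rule eq_matI) (auto simp: R_def four_block_mat_def)
  then have det_R: "det R = det (mat m m (\<lambda>(i,j). Q $$ (r + i, r + j)))"
    by (simp add: det_four_block_mat_lower_left_zero[of _ r _ m])
  have "P * R = four_block_mat (mat r r (\<lambda>(i,j). P $$ (i,j))) (0\<^sub>m r m)
      (mat m r (\<lambda>(i,j). P $$ (r + i, j))) (1\<^sub>m m)"
    unfolding PR by (rule eq_matI) (auto simp: four_block_mat_def)
  then have "det (P * R) = det (mat r r (\<lambda>(i,j). P $$ (i,j)))"
    by (simp add: det_four_block_mat_upper_right_zero[of _ r _ m])
  moreover have "det (P * R) = det P * det R"
    by (rule det_mult[OF P]) (simp add: R_def)
  ultimately show ?thesis using det_R by simp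
qed

lemma jacobi_complementary_minor:
  fixes H E :: "'b::idom mat"
  assumes H: "H \<in> carrier_mat (r + m) (r + m)" and E: "E \<in> carrier_mat (r + m) (r + m)"
    and HE: "H * E = 1\<^sub>m (r + m)" and s: "s permutes {0..<r + m}"
  shows "det (mat r r (\<lambda>(i,j). H $$ (i, s j))) =
    signof s * det H * det (mat m m (\<lambda>(k,l). E $$ (s (r + k), r + l)))"
proof -
  let ?N = "r + m"
  define P where "P = mat ?N ?N (\<lambda>(i,j). H $$ (i, s j))"
  define Q where "Q = mat ?N ?N (\<lambda>(i,j). E $$ (s i, j))"
  have s_bound: "\<And>i. i < ?N \<Longrightarrow> s i < ?N" using s by (simp add: permutes_in_image)
  have "P * Q = 1\<^sub>m ?N"
  proof (rule eq_matI)
    fix i j assume "i < dim_row (1\<^sub>m ?N)" "j < dim_col (1\<^sub>m ?N)"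
    then have i: "i < ?N" and j: "j < ?N" by simp_all
    have "(P * Q) $$ (i,j) = (\<Sum>k=0..<?N. H $$ (i, s k) * E $$ (s k, j))"
      using i j s_bound by (auto simp: P_def Q_def scalar_prod_def intro!: sum.cong)
    also have "\<dots> = (\<Sum>k=0..<?N. H $$ (i, k) * E $$ (k, j))"
      using sum.permute[OF s, of "\<lambda>k. H $$ (i, k) * E $$ (k, j)"] by (simp add: comp_def)
    also have "\<dots> = (H * E) $$ (i,j)"
      using i j H E by (simp add: scalar_prod_def)
    finally show "(P * Q) $$ (i,j) = 1\<^sub>m ?N $$ (i,j)" using HE by simp
  qed (simp_all add: P_def Q_def)
  then have "det (mat r r (\<lambda>(i,j). P $$ (i,j))) = det P * det (mat m m (\<lambda>(i,j). Q $$ (r + i, r + j)))"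
    by (intro det_upper_left_block_of_inverse) (simp_all add: P_def Q_def)
  moreover have "det P = signof s * det H"
    unfolding P_def by (rule det_permute_cols[OF H s])
  moreover have "mat r r (\<lambda>(i,j). P $$ (i,j)) = mat r r (\<lambda>(i,j). H $$ (i, s j))"
    by (auto intro!: eq_matI simp: P_def)
  moreover have "mat m m (\<lambda>(i,j). Q $$ (r + i, r + j)) = mat m m (\<lambda>(k,l). E $$ (s (r + k), r + l))"
    by (auto intro!: eq_matI simp: Q_def)
  ultimately show ?thesis by simp
qed

definition rev_perm :: "nat \<Rightarrow> nat \<Rightarrow> nat" where
  "rev_perm c l = (if l < c then c - 1 - l else l)"

lemma inj_on_imp_permutes_atLeastLessThan:
  fixes N :: nat
  assumes "inj_on f {0..<N}" "\<And>x. x < N \<Longrightarrow> f x < N" "\<And>x. N \<le> x \<Longrightarrow> f x = x"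
  shows "f permutes {0..<N}"
proof (rule bij_imp_permutes)
  have "f ` {0..<N} = {0..<N}" by (rule endo_inj_surj) (use assms in auto)
  then show "bij_betw f {0..<N} {0..<N}" using assms(1) by (simp add: bij_betw_def)
qed (use assms in auto)

lemma rev_perm_permutes: "rev_perm c permutes {0..<c}"
  by (rule inj_on_imp_permutes_atLeastLessThan) (auto simp: rev_perm_def inj_on_def)

section \<open>Minors of triangular Toeplitz matrices\<close>

definition toeplitz_cols :: "(nat \<Rightarrow> 'b::zero) \<Rightarrow> nat \<Rightarrow> (nat \<Rightarrow> nat) \<Rightarrow> 'b mat" where
  "toeplitz_cols p r n = mat r r (\<lambda>(i,j). if i \<le> n j then p (n j - i) else 0)"

lemma toeplitz_cols_carrier [simp]: "toeplitz_cols p r n \<in> carrier_mat r r"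
  by (simp add: toeplitz_cols_def)

lemma toeplitz_mult_eq_one:
  fixes p q :: "nat \<Rightarrow> 'b::comm_ring_1"
  assumes conv: "\<And>m. (\<Sum>a\<le>m. p a * q (m - a)) = (if m = 0 then 1 else 0)"
  shows "toeplitz_cols p N (\<lambda>j. j) * toeplitz_cols q N (\<lambda>j. j) = 1\<^sub>m N"
proof (rule eq_matI)
  fix i j assume "i < dim_row (1\<^sub>m N)" "j < dim_col (1\<^sub>m N)"
  then have i: "i < N" and j: "j < N" by simp_all
  have entry: "(toeplitz_cols p N (\<lambda>j. j) * toeplitz_cols q N (\<lambda>j. j)) $$ (i,j) =
      (\<Sum>k=0..<N. (if i \<le> k then p (k - i) else 0) * (if k \<le> j then q (j - k) else 0))"
    using i j by (simp add: toeplitz_cols_def scalar_prod_def)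
  show "(toeplitz_cols p N (\<lambda>j. j) * toeplitz_cols q N (\<lambda>j. j)) $$ (i,j) = 1\<^sub>m N $$ (i,j)"
  proof (cases "i \<le> j")
    case False
    have "(\<Sum>k=0..<N. (if i \<le> k then p (k - i) else 0) * (if k \<le> j then q (j - k) else 0)) = 0"
      by (rule sum.neutral) (use False in auto)
    then show ?thesis using entry i j False by simp
  next
    case True
    have "(\<Sum>k=0..<N. (if i \<le> k then p (k - i) else 0) * (if k \<le> j then q (j - k) else 0)) =
        (\<Sum>k=i..j. p (k - i) * q (j - k))"
      by (rule sum.mono_neutral_cong_right) (use True j in auto)
    also have "\<dots> = (\<Sum>a=0..j - i. p a * q (j - i - a))"
      using sum.shift_bounds_cl_nat_ivl[of "\<lambda>k. p (k - i) * q (j - k)" 0 i "j - i"] True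
      by (simp add: add.commute)
    also have "\<dots> = (if j - i = 0 then 1 else 0)"
      using conv[of "j - i"] by (simp add: atMost_atLeast0)
    finally show ?thesis using entry i j True by simp
  qed
qed (simp_all add: toeplitz_cols_def)

lemma det_toeplitz_unitriangular:
  fixes p :: "nat \<Rightarrow> 'b::comm_ring_1"
  assumes "p 0 = 1"
  shows "det (toeplitz_cols p N (\<lambda>j. j)) = 1"
proof -
  have "det (toeplitz_cols p N (\<lambda>j. j)) = prod_list (diag_mat (toeplitz_cols p N (\<lambda>j. j)))"
    by (rule det_upper_triangular[of _ N]) (auto simp: upper_triangular_def toeplitz_cols_def)
  also have "\<dots> = 1" by (simp add: prod_list_diag_prod toeplitz_cols_def assms)
  finally show ?thesis .
qed

text \<open>Jacobi's theorem for the mutually inverse Toeplitz matrices of \<open>p\<close> and \<open>q\<close>; the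
  hypotheses on \<open>s\<close> say that the numbers \<open>n j\<close> and \<open>r + c - 1 - n' k\<close> exhaust \<open>{0..<r + c}\<close>.\<close>
lemma det_toeplitz_cols_complement:
  fixes p q :: "nat \<Rightarrow> 'b::idom"
  assumes p0: "p 0 = 1"
    and conv: "\<And>m. (\<Sum>a\<le>m. p a * q (m - a)) = (if m = 0 then 1 else 0)"
    and s: "s permutes {0..<r + c}"
    and s_low: "\<And>j. j < r \<Longrightarrow> s j = n j"
    and s_high: "\<And>k. k < c \<Longrightarrow> s (r + k) = r + c - 1 - n' k"
    and n'_bound: "\<And>k. k < c \<Longrightarrow> n' k < r + c"
  shows "det (toeplitz_cols p r n) = signof s * signof (rev_perm c) * det (toeplitz_cols q c n')"
proof -
  let ?N = "r + c"
  define H where "H = toeplitz_cols p ?N (\<lambda>j. j)"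
  define E where "E = toeplitz_cols q ?N (\<lambda>j. j)"
  define T where "T = toeplitz_cols q c n'"
  have s_bound: "\<And>i. i < ?N \<Longrightarrow> s i < ?N" using s by (simp add: permutes_in_image)
  have "det (mat r r (\<lambda>(i,j). H $$ (i, s j))) =
      signof s * det H * det (mat c c (\<lambda>(k,l). E $$ (s (r + k), r + l)))"
    by (rule jacobi_complementary_minor[OF _ _ _ s])
      (simp_all add: H_def E_def toeplitz_cols_def toeplitz_mult_eq_one[OF conv, unfolded toeplitz_cols_def])
  moreover have "det H = 1"
    unfolding H_def by (rule det_toeplitz_unitriangular[of p, OF p0])
  moreover have "mat r r (\<lambda>(i,j). H $$ (i, s j)) = toeplitz_cols p r n"
    by (rule eq_matI) (auto simp: H_def toeplitz_cols_def s_low[symmetric] s_bound)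
  moreover have "mat c c (\<lambda>(k,l). E $$ (s (r + k), r + l)) =
      mat c c (\<lambda>(k,l). transpose_mat T $$ (k, rev_perm c l))"
  proof (rule eq_matI)
    fix k l assume "k < dim_row (mat c c (\<lambda>(k,l). transpose_mat T $$ (k, rev_perm c l)))"
      and "l < dim_col (mat c c (\<lambda>(k,l). transpose_mat T $$ (k, rev_perm c l)))"
    then have k: "k < c" and l: "l < c" by simp_all
    have "s (r + k) < ?N" using k by (intro s_bound) simp
    moreover have "s (r + k) \<le> r + l \<longleftrightarrow> c - 1 - l \<le> n' k"
      and "r + l - s (r + k) = n' k - (c - 1 - l)"
      using s_high[OF k] n'_bound[OF k] l by auto
    ultimately show "mat c c (\<lambda>(k,l). E $$ (s (r + k), r + l)) $$ (k,l) =
        mat c c (\<lambda>(k,l). transpose_mat T $$ (k, rev_perm c l)) $$ (k,l)"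
      using k l by (simp add: E_def T_def toeplitz_cols_def rev_perm_def)
  qed simp_all
  moreover have "det (mat c c (\<lambda>(k,l). transpose_mat T $$ (k, rev_perm c l))) = signof (rev_perm c) * det T"
    using det_permute_cols[OF _ rev_perm_permutes, of "transpose_mat T"]
    by (simp add: T_def toeplitz_cols_def det_transpose[of _ c])
  ultimately show ?thesis by (simp add: T_def)
qed

section \<open>Vandermonde determinants\<close>

lemma det_eval_monic_basis:
  fixes x :: "nat \<Rightarrow> 'b::idom" and P :: "nat \<Rightarrow> 'b poly"
  assumes deg: "\<And>i. i < r \<Longrightarrow> degree (P i) \<le> i" and lc: "\<And>i. i < r \<Longrightarrow> coeff (P i) i = 1"
  shows "det (mat r r (\<lambda>(i,j). poly (P i) (x j))) = det (mat r r (\<lambda>(i,j). x j ^ i))"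
proof -
  define T where "T = mat r r (\<lambda>(i,k). coeff (P i) k)"
  define V where "V = mat r r (\<lambda>(k,j). x j ^ k)"
  have "mat r r (\<lambda>(i,j). poly (P i) (x j)) = T * V"
  proof (rule eq_matI)
    fix i j assume "i < dim_row (T * V)" "j < dim_col (T * V)"
    then have i: "i < r" and j: "j < r" by (simp_all add: T_def V_def)
    have "(T * V) $$ (i,j) = (\<Sum>k=0..<r. coeff (P i) k * x j ^ k)"
      using i j by (simp add: T_def V_def scalar_prod_def)
    also have "\<dots> = (\<Sum>k\<le>degree (P i). coeff (P i) k * x j ^ k)"
      by (rule sum.mono_neutral_right) (use deg[OF i] i in \<open>auto simp: coeff_eq_0\<close>)
    also have "\<dots> = poly (P i) (x j)" by (simp add: poly_altdef)
    finally show "mat r r (\<lambda>(i,j). poly (P i) (x j)) $$ (i,j) = (T * V) $$ (i,j)"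
      using i j by simp
  qed (simp_all add: T_def V_def)
  moreover have "det T = 1"
  proof -
    have "det T = prod_list (diag_mat T)"
    proof (rule det_lower_triangular[where n = r])
      fix i j assume "i < j" "j < r"
      then show "T $$ (i,j) = 0" using deg[of i] by (simp add: T_def coeff_eq_0)
    qed (simp add: T_def)
    also have "\<dots> = 1" by (simp add: prod_list_diag_prod T_def lc)
    finally show ?thesis .
  qed
  ultimately show ?thesis
    using det_mult[of T r V] by (simp add: T_def V_def)
qed

definition newton_poly :: "(nat \<Rightarrow> 'b::comm_ring_1) \<Rightarrow> nat \<Rightarrow> 'b poly" where
  "newton_poly x i = (\<Prod>k<i. [:- x k, 1:])"

lemma degree_newton_poly: "degree (newton_poly (x :: nat \<Rightarrow> 'b::idom) i) = i"
  unfolding newton_poly_def by (subst degree_prod_eq_sum_degree) auto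

lemma coeff_newton_poly_degree: "coeff (newton_poly (x :: nat \<Rightarrow> 'b::idom) i) i = 1"
proof -
  have "coeff (newton_poly x i) i = lead_coeff (newton_poly x i)" by (simp add: degree_newton_poly)
  also have "\<dots> = 1" unfolding newton_poly_def lead_coeff_prod by simp
  finally show ?thesis .
qed

lemma poly_newton_poly: "poly (newton_poly x i) y = (\<Prod>k<i. y - x k)"
  by (simp add: newton_poly_def poly_prod)

lemma poly_newton_poly_of_nat:
  "poly (newton_poly of_nat i) (of_nat n :: 'b::field_char_0) =
    (if i \<le> n then fact n / fact (n - i) else 0)"
proof (induction i)
  case (Suc i)
  have "poly (newton_poly of_nat (Suc i)) (of_nat n :: 'b) =
      poly (newton_poly of_nat i) (of_nat n) * (of_nat n - of_nat i)"
    by (simp add: poly_newton_poly)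
  also have "\<dots> = (if Suc i \<le> n then fact n / fact (n - Suc i) else 0)"
  proof (cases "Suc i \<le> n")
    case True
    have fact_eq: "fact (n - i) = (of_nat (n - i) :: 'b) * fact (n - Suc i)"
      using True by (metis Suc_diff_Suc Suc_le_lessD fact_Suc)
    have "(of_nat (n - i) :: 'b) = of_nat n - of_nat i" "(of_nat (n - i) :: 'b) \<noteq> 0"
      using True by (simp_all add: of_nat_diff)
    then show ?thesis using True Suc.IH unfolding fact_eq by (simp add: field_simps)
  next
    case False
    then show ?thesis using Suc.IH by (cases "i = n") auto
  qed
  finally show ?case .
qed (simp add: poly_newton_poly)

lemma det_vandermonde_mat:
  fixes x :: "nat \<Rightarrow> 'b::idom"
  shows "det (mat r r (\<lambda>(i,j). x j ^ i)) = (\<Prod>j<r. \<Prod>i<j. x j - x i)"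
proof -
  have "det (mat r r (\<lambda>(i,j). x j ^ i)) = det (mat r r (\<lambda>(i,j). poly (newton_poly x i) (x j)))"
    by (rule det_eval_monic_basis[symmetric]) (simp_all add: degree_newton_poly coeff_newton_poly_degree)
  also have "\<dots> = prod_list (diag_mat (mat r r (\<lambda>(i,j). poly (newton_poly x i) (x j))))"
    by (rule det_upper_triangular[of _ r])
      (auto simp: upper_triangular_def poly_newton_poly intro!: prod_zero)
  also have "\<dots> = (\<Prod>j<r. \<Prod>i<j. x j - x i)"
    by (simp add: prod_list_diag_prod poly_newton_poly atLeast0LessThan)
  finally show ?thesis .
qed

lemma det_eval_newton_poly:
  fixes x y :: "nat \<Rightarrow> 'b::idom"
  shows "det (mat r r (\<lambda>(i,j). poly (newton_poly y i) (x j))) = (\<Prod>j<r. \<Prod>i<j. x j - x i)"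
  by (subst det_eval_monic_basis)
    (simp_all add: degree_newton_poly coeff_newton_poly_degree det_vandermonde_mat)

lemma vandermonde_nonzero:
  assumes "\<And>i j. i < j \<Longrightarrow> j < r \<Longrightarrow> n i < n j"
  shows "vandermonde r n \<noteq> 0"
proof -
  have "vandermonde r n > 0"
    unfolding vandermonde_def by (intro prod_pos) (use assms in auto)
  then show ?thesis by simp
qed

section \<open>Conjugate partitions\<close>

lemma is_partition_nth_antimono:
  assumes "is_partition lam" "i \<le> j" "j < length lam"
  shows "lam ! j \<le> lam ! i"
  using assms sorted_wrt_nth_less[of "(\<ge>)" lam i j]
  by (cases "i = j") (auto simp: is_partition_def)

lemma fold_max_upper: "a \<le> fold max xs a \<and> (\<forall>x\<in>set xs. x \<le> fold max xs (a::nat))"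
proof (induction xs arbitrary: a)
  case (Cons y ys)
  from Cons.IH[of "max y a"] show ?case by auto
qed simp

lemma length_conj_partition: "length (conj_partition lam) = fold max lam 0"
  by (simp add: conj_partition_def)

lemma nth_conj_partition:
  assumes "k < length (conj_partition lam)"
  shows "conj_partition lam ! k = card {i. i < length lam \<and> k < lam ! i}"
proof -
  have "conj_partition lam ! k = length (filter (\<lambda>x. Suc k \<le> x) lam)"
    using assms by (simp add: conj_partition_def length_conj_partition del: upt_Suc)
  also have "\<dots> = card {i. i < length lam \<and> Suc k \<le> lam ! i}"
    by (rule length_filter_conv_card)
  finally show ?thesis by (simp add: Suc_le_eq)
qed

lemma down_closed_eq_lessThan_card:
  assumes "finite S" and "\<And>i j. j \<le> i \<Longrightarrow> i \<in> S \<Longrightarrow> j \<in> (S::nat set)"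
  shows "S = {..<card S}"
proof (cases "S = {}")
  case False
  define M where "M = Max S"
  have "S = {..M}"
    using assms Max_in[OF assms(1) False] by (auto simp: M_def)
  then show ?thesis by (simp add: lessThan_Suc_atMost)
qed simp

lemma less_nth_conj_partition_iff:
  assumes part: "is_partition lam" and a: "a < length lam" and k: "k < length (conj_partition lam)"
  shows "a < conj_partition lam ! k \<longleftrightarrow> k < lam ! a"
proof -
  let ?S = "{i. i < length lam \<and> k < lam ! i}"
  have "?S = {..<card ?S}"
  proof (rule down_closed_eq_lessThan_card)
    fix i j assume "j \<le> i" "i \<in> ?S"
    then show "j \<in> ?S" using is_partition_nth_antimono[OF part, of j i] by auto
  qed simp
  then have "a \<in> ?S \<longleftrightarrow> a < card ?S" by blast
  then show ?thesis using a by (simp add: nth_conj_partition[OF k])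
qed

lemma nth_conj_partition_le_length:
  assumes "k < length (conj_partition lam)"
  shows "conj_partition lam ! k \<le> length lam"
proof -
  have "card {i. i < length lam \<and> k < lam ! i} \<le> card {..<length lam}"
    by (rule card_mono) auto
  then show ?thesis by (simp add: nth_conj_partition[OF assms])
qed

lemma conj_partition_nth_antimono:
  assumes "k \<le> k'" "k' < length (conj_partition lam)"
  shows "conj_partition lam ! k' \<le> conj_partition lam ! k"
proof -
  have "card {i. i < length lam \<and> k' < lam ! i} \<le> card {i. i < length lam \<and> k < lam ! i}"
    by (rule card_mono) (use assms(1) in auto)
  then show ?thesis using assms by (simp add: nth_conj_partition)
qed

lemma nth_le_length_conj_partition:
  assumes "i < length lam"
  shows "lam ! i \<le> length (conj_partition lam)"
  using fold_max_upper[of 0 lam] nth_mem[OF assms] by (simp add: length_conj_partition)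

lemma part_seq_bound:
  assumes "j < length lam"
  shows "part_seq lam j < length lam + length (conj_partition lam)"
proof -
  have "lam ! (length lam - 1 - j) \<le> length (conj_partition lam)"
    by (rule nth_le_length_conj_partition) (use assms in simp)
  then show ?thesis using assms by (simp add: part_seq_def)
qed

lemma part_seq_strict_mono:
  assumes "is_partition lam" "j < j'" "j' < length lam"
  shows "part_seq lam j < part_seq lam j'"
proof -
  have "lam ! (length lam - 1 - j) \<le> lam ! (length lam - 1 - j')"
    by (rule is_partition_nth_antimono) (use assms in auto)
  then show ?thesis using assms by (simp add: part_seq_def)
qed

lemma part_seq_conj_bound:
  assumes "k < length (conj_partition lam)"
  shows "part_seq (conj_partition lam) k < length lam + length (conj_partition lam)"
proof -
  have "conj_partition lam ! (length (conj_partition lam) - 1 - k) \<le> length lam"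
    by (rule nth_conj_partition_le_length) (use assms in simp)
  then show ?thesis using assms by (simp add: part_seq_def)
qed

lemma part_seq_conj_strict_mono:
  assumes "k < k'" "k' < length (conj_partition lam)"
  shows "part_seq (conj_partition lam) k < part_seq (conj_partition lam) k'"
proof -
  let ?c = "length (conj_partition lam)"
  have "conj_partition lam ! (?c - 1 - k) \<le> conj_partition lam ! (?c - 1 - k')"
    by (rule conj_partition_nth_antimono) (use assms in auto)
  then show ?thesis using assms by (simp add: part_seq_def)
qed

text \<open>The numbers \<open>part_seq lam j\<close> and \<open>r + c - 1 - part_seq lam' k\<close> are the positions of
  the vertical and of the horizontal steps along the boundary of the Young diagram, so together
  they fill \<open>{0..<r + c}\<close>.\<close>
lemma part_seq_add_conj_ne:
  assumes part: "is_partition lam"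
    and j: "j < length lam" and k: "k < length (conj_partition lam)"
  shows "part_seq lam j + part_seq (conj_partition lam) k \<noteq> length lam + length (conj_partition lam) - 1"
proof -
  let ?r = "length lam" and ?c = "length (conj_partition lam)"
  define a where "a = ?r - 1 - j"
  define b where "b = ?c - 1 - k"
  have a: "a < ?r" and b: "b < ?c" and "a + j + 1 = ?r" and "b + k + 1 = ?c"
    using j k by (auto simp: a_def b_def)
  moreover have "part_seq lam j + part_seq (conj_partition lam) k = lam ! a + j + conj_partition lam ! b + k"
    by (simp add: part_seq_def a_def b_def)
  moreover have "a < conj_partition lam ! b \<longleftrightarrow> b < lam ! a"
    by (rule less_nth_conj_partition_iff[OF part a b])
  ultimately show ?thesis by linarith
qed

definition jt_perm :: "nat list \<Rightarrow> nat \<Rightarrow> nat" where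
  "jt_perm lam j =
    (if j < length lam then part_seq lam j
     else if j < length lam + length (conj_partition lam)
     then length lam + length (conj_partition lam) - 1 - part_seq (conj_partition lam) (j - length lam)
     else j)"

lemma jt_perm_permutes:
  assumes part: "is_partition lam"
  shows "jt_perm lam permutes {0..<length lam + length (conj_partition lam)}"
proof (rule inj_on_imp_permutes_atLeastLessThan)
  let ?r = "length lam" and ?c = "length (conj_partition lam)"
  have low: "jt_perm lam x \<noteq> jt_perm lam y" if "x < y" "y < ?r" for x y
    using that part_seq_strict_mono[OF part] by (auto simp: jt_perm_def dest: less_imp_neq)
  have high: "jt_perm lam x \<noteq> jt_perm lam y" if "?r \<le> x" "x < y" "y < ?r + ?c" for x y
  proof -
    have "part_seq (conj_partition lam) (x - ?r) < part_seq (conj_partition lam) (y - ?r)"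
      and "part_seq (conj_partition lam) (y - ?r) < ?r + ?c"
      using that by (intro part_seq_conj_strict_mono part_seq_conj_bound; simp)+
    then show ?thesis using that by (simp add: jt_perm_def)
  qed
  have mixed: "jt_perm lam x \<noteq> jt_perm lam y" if "x < ?r" "?r \<le> y" "y < ?r + ?c" for x y
  proof -
    have "part_seq lam x + part_seq (conj_partition lam) (y - ?r) \<noteq> ?r + ?c - 1"
      and "part_seq (conj_partition lam) (y - ?r) < ?r + ?c"
      using that by (intro part_seq_add_conj_ne[OF part] part_seq_conj_bound; simp)+
    then show ?thesis using that by (simp add: jt_perm_def)
  qed
  show "inj_on (jt_perm lam) {0..<?r + ?c}"
  proof (rule inj_onI, rule ccontr)
    fix x y assume "x \<in> {0..<?r + ?c}" "y \<in> {0..<?r + ?c}" "jt_perm lam x = jt_perm lam y" "x \<noteq> y"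
    then show False using low high mixed
      by (metis atLeastLessThan_iff linorder_neqE_nat linorder_not_le)
  qed
  show "\<And>x. x < ?r + ?c \<Longrightarrow> jt_perm lam x < ?r + ?c"
    using part_seq_bound[of _ lam] by (auto simp: jt_perm_def)
  show "\<And>x. ?r + ?c \<le> x \<Longrightarrow> jt_perm lam x = x" by (simp add: jt_perm_def)
qed

section \<open>The dual Jacobi--Trudi identity\<close>

text \<open>Coefficientwise \<open>(\<Sum>\<^sub>k h k (-t)^k) (\<Sum>\<^sub>k e k t^k) = 1\<close>, the relation between
  complete and elementary symmetric functions.\<close>
definition dual_seqs :: "(nat \<Rightarrow> 'b::comm_ring_1) \<Rightarrow> (nat \<Rightarrow> 'b) \<Rightarrow> bool" where
  "dual_seqs h e \<longleftrightarrow> (\<forall>m. (\<Sum>a\<le>m. (-1)^a * h a * e (m - a)) = (if m = 0 then 1 else 0))"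

lemma minus_one_power_diff:
  assumes "i \<le> n"
  shows "(-1::'b::comm_ring_1) ^ (n - i) = (-1) ^ i * (-1) ^ n"
proof -
  have "(-1::'b) ^ n = (-1) ^ (n - i) * (-1) ^ i"
    using assms by (simp add: power_add[symmetric])
  then have "(-1::'b) ^ i * (-1) ^ n = (-1) ^ (n - i) * ((-1) ^ i * (-1) ^ i)"
    by (simp add: ac_simps)
  then show ?thesis by simp
qed

lemma dual_seqs_sym:
  assumes "dual_seqs h e"
  shows "dual_seqs e h"
  unfolding dual_seqs_def
proof
  fix m
  have "(\<Sum>a\<le>m. (-1)^a * e a * h (m - a)) = (\<Sum>a\<le>m. (-1)^(m - a) * e (m - a) * h (m - (m - a)))"
    by (rule sum.reindex_bij_witness[of _ "\<lambda>a. m - a" "\<lambda>a. m - a"]) auto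
  also have "\<dots> = (\<Sum>a\<le>m. (-1)^m * ((-1)^a * h a * e (m - a)))"
    by (rule sum.cong) (auto simp: minus_one_power_diff)
  also have "\<dots> = (-1)^m * (if m = 0 then 1 else 0)"
    using assms by (simp add: dual_seqs_def sum_distrib_left[symmetric])
  finally show "(\<Sum>a\<le>m. (-1)^a * e a * h (m - a)) = (if m = 0 then 1 else 0)" by simp
qed

text \<open>The constant \<open>c\<close> is a sign; all that matters below is that it does not depend on \<open>h\<close>
  and \<open>e\<close>.\<close>
lemma jacobi_trudi_dual:
  assumes part: "is_partition lam"
  obtains c :: int where
    "\<And>h e :: nat \<Rightarrow> 'b::idom. h 0 = 1 \<Longrightarrow> dual_seqs h e \<Longrightarrow>
      det (toeplitz_cols h (length lam) (part_seq lam)) =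
      of_int c * det (toeplitz_cols e (length (conj_partition lam)) (part_seq (conj_partition lam)))"
proof -
  let ?r = "length lam" and ?c = "length (conj_partition lam)"
  let ?n = "part_seq lam" and ?n' = "part_seq (conj_partition lam)"
  define c :: int where "c = (\<Prod>i<?r. (-1)^i) * (\<Prod>j<?r. (-1)^(?n j)) *
    signof (jt_perm lam) * signof (rev_perm ?c)"
  have "det (toeplitz_cols h ?r ?n) = of_int c * det (toeplitz_cols e ?c ?n')"
    if h0: "h 0 = 1" and dual: "dual_seqs h e" for h e :: "nat \<Rightarrow> 'b"
  proof -
    define p where "p a = (-1)^a * h a" for a
    have det_p: "det (toeplitz_cols p ?r ?n) = signof (jt_perm lam) * signof (rev_perm ?c) * det (toeplitz_cols e ?c ?n')"
      by (rule det_toeplitz_cols_complement[OF _ _ jt_perm_permutes[OF part]])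
        (use h0 dual in \<open>auto simp: p_def dual_seqs_def jt_perm_def part_seq_conj_bound\<close>)
    have signs: "(-1::'b)^a * ((-1)^b * ((-1)^a * (-1)^b)) = 1" for a b
      by (simp add: mult.left_commute[of "(-1::'b)^b"])
    have "toeplitz_cols h ?r ?n =
        mat ?r ?r (\<lambda>(i,j). (-1)^i * (-1)^(?n j) * toeplitz_cols p ?r ?n $$ (i,j))"
      by (rule eq_matI) (auto simp: toeplitz_cols_def p_def minus_one_power_diff signs)
    with det_p show ?thesis
      by (simp add: det_scale_rows_cols[OF toeplitz_cols_carrier] c_def of_int_prod)
  qed
  then show ?thesis by (rule that)
qed

section \<open>Wronskians of Appell sequences\<close>

definition egf_coeff :: "(nat \<Rightarrow> 'a::field_char_0 poly) \<Rightarrow> nat \<Rightarrow> 'a poly" where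
  "egf_coeff A k = smult (inverse (fact k)) (A k)"

lemma appell_pderiv_funpow:
  assumes "appell A"
  shows "(pderiv ^^ i) (A m) = (if i \<le> m then smult (fact m / fact (m - i)) (A (m - i)) else 0)"
proof (induction i)
  case (Suc i)
  show ?case
  proof (cases "Suc i \<le> m")
    case True
    then have "pderiv (A (m - i)) = smult (of_nat (m - i)) (A (m - Suc i))"
      using assms unfolding appell_def by (metis Suc_diff_Suc Suc_le_eq diff_Suc_1 le_add1 plus_1_eq_Suc)
    moreover have "fact m / fact (m - i) * (of_nat (m - i) :: 'a) = fact m / fact (m - Suc i)"
    proof -
      have fact_eq: "fact (m - i) = (of_nat (m - i) :: 'a) * fact (m - Suc i)"
        using True by (metis Suc_diff_Suc Suc_le_lessD fact_Suc)
      have "(of_nat (m - i) :: 'a) \<noteq> 0" using True by simp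
      then show ?thesis unfolding fact_eq by (simp add: field_simps)
    qed
    ultimately show ?thesis using True Suc.IH by (simp add: pderiv_smult)
  next
    case False
    then show ?thesis using Suc.IH assms by (cases "i = m") (auto simp: appell_def pderiv_smult)
  qed
qed simp

lemma wronskian_of_appell:
  assumes "appell A"
  shows "wronskian r (\<lambda>j. A (n j)) =
    smult (\<Prod>j<r. fact (n j)) (det (toeplitz_cols (egf_coeff A) r n))"
proof -
  have "wronskian r (\<lambda>j. A (n j)) =
      det (mat r r (\<lambda>(i,j). 1 * [:fact (n j):] * toeplitz_cols (egf_coeff A) r n $$ (i,j)))"
    unfolding wronskian_def
    by (rule arg_cong[where f = det], rule eq_matI)
      (auto simp: toeplitz_cols_def appell_pderiv_funpow[OF assms] egf_coeff_def divide_inverse)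
  also have "\<dots> = (\<Prod>i<r. 1) * (\<Prod>j<r. [:fact (n j):]) * det (toeplitz_cols (egf_coeff A) r n)"
    by (rule det_scale_rows_cols[where u = "\<lambda>_. 1"]) simp
  finally show ?thesis by (simp add: prod_to_poly)
qed

lemma wronskian_appell_eq_det:
  assumes "appell A"
  shows "wronskian_appell A lam =
    smult ((\<Prod>j<length lam. fact (part_seq lam j)) / of_int (vandermonde (length lam) (part_seq lam)))
      (det (toeplitz_cols (egf_coeff A) (length lam) (part_seq lam)))"
  by (simp add: wronskian_appell_def wronskian_of_appell[OF assms] divide_inverse mult.commute)

lemma wronskian_appell_conj_proportional:
  assumes part: "is_partition lam"
  obtains c :: "'a::field_char_0" where
    "\<And>X Y. appell X \<Longrightarrow> appell Y \<Longrightarrow> dual_seqs (egf_coeff Y) (egf_coeff X) \<Longrightarrow>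
      wronskian_appell Y lam = smult c (wronskian_appell X (conj_partition lam))"
proof -
  let ?r = "length lam" and ?c = "length (conj_partition lam)"
  let ?n = "part_seq lam" and ?n' = "part_seq (conj_partition lam)"
  obtain z :: int where jt: "\<And>h e :: nat \<Rightarrow> 'a poly. h 0 = 1 \<Longrightarrow> dual_seqs h e \<Longrightarrow>
      det (toeplitz_cols h ?r ?n) = of_int z * det (toeplitz_cols e ?c ?n')"
    using jacobi_trudi_dual[OF part] by blast
  define scale :: "nat list \<Rightarrow> 'a" where
    "scale mu = (\<Prod>j<length mu. fact (part_seq mu j)) / of_int (vandermonde (length mu) (part_seq mu))" for mu
  have "vandermonde ?c ?n' \<noteq> 0"
    by (rule vandermonde_nonzero) (rule part_seq_conj_strict_mono)
  then have scale_conj: "scale (conj_partition lam) \<noteq> 0"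
    by (simp add: scale_def)
  show ?thesis
  proof (rule that[of "scale lam * of_int z / scale (conj_partition lam)"])
    fix X Y :: "nat \<Rightarrow> 'a poly"
    assume X: "appell X" and Y: "appell Y" and dual: "dual_seqs (egf_coeff Y) (egf_coeff X)"
    have "wronskian_appell Y lam = smult (scale lam) (det (toeplitz_cols (egf_coeff Y) ?r ?n))"
      by (simp add: wronskian_appell_eq_det[OF Y] scale_def)
    also have "det (toeplitz_cols (egf_coeff Y) ?r ?n) = of_int z * det (toeplitz_cols (egf_coeff X) ?c ?n')"
      by (rule jt) (use Y dual in \<open>simp_all add: egf_coeff_def appell_def\<close>)
    also have "det (toeplitz_cols (egf_coeff X) ?c ?n') =
        smult (inverse (scale (conj_partition lam))) (wronskian_appell X (conj_partition lam))"
      using scale_conj by (simp add: wronskian_appell_eq_det[OF X] scale_def)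
    finally show "wronskian_appell Y lam =
        smult (scale lam * of_int z / scale (conj_partition lam)) (wronskian_appell X (conj_partition lam))"
      by (simp add: of_int_poly divide_inverse mult_ac)
  qed
qed

lemma appell_monom: "appell (\<lambda>n. monom (1::'a::field_char_0) n)"
  unfolding appell_def by (simp add: pderiv_monom smult_monom monom_0 one_pCons)

lemma egf_coeff_monom: "egf_coeff (\<lambda>n. monom 1 n) k = (monom (inverse (fact k)) k :: 'a::field_char_0 poly)"
  by (simp add: egf_coeff_def smult_monom)

lemma minus_one_power_poly: "(-1 :: 'a::comm_ring_1 poly) ^ a = [:(-1) ^ a:]"
  by (induction a) (simp_all add: ac_simps)

text \<open>This is \<open>e^(xt) e^(-xt) = 1\<close>.\<close>
lemma dual_seqs_monom:
  "dual_seqs (egf_coeff (\<lambda>n. monom 1 n)) (egf_coeff (\<lambda>n. monom (1::'a::field_char_0) n))"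
  unfolding dual_seqs_def
proof
  fix m
  have "(\<Sum>a\<le>m. (-1)^a * egf_coeff (\<lambda>n. monom 1 n) a * egf_coeff (\<lambda>n. monom 1 n) (m - a)) =
      (\<Sum>a\<le>m. monom ((-1)^a * inverse (fact a) * inverse (fact (m - a))) m :: 'a poly)"
    by (rule sum.cong) (auto simp: egf_coeff_monom minus_one_power_poly mult_monom smult_monom mult.assoc)
  also have "\<dots> = monom (\<Sum>a\<le>m. (-1)^a * inverse (fact a) * inverse (fact (m - a))) m"
    by (simp add: monom_sum)
  also have "(\<Sum>a\<le>m. (-1)^a * inverse (fact a) * inverse (fact (m - a))) =
      inverse (fact m) * (\<Sum>a\<le>m. (-1)^a * of_nat (m choose a) :: 'a)"
    unfolding sum_distrib_left by (rule sum.cong) (auto simp: binomial_fact field_simps)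
  also have "\<dots> = (if m = 0 then 1 else 0)"
    using choose_alternating_sum[of m] by (cases "m = 0") auto
  finally show "(\<Sum>a\<le>m. (-1)^a * egf_coeff (\<lambda>n. monom 1 n) a * egf_coeff (\<lambda>n. monom 1 n) (m - a)) =
      (if m = 0 then 1 else (0 :: 'a poly))"
    by (simp add: monom_0)
qed

lemma prod_monom: "finite S \<Longrightarrow> (\<Prod>i\<in>S. monom (a i) (k i)) = monom (\<Prod>i\<in>S. a i) (\<Sum>i\<in>S. k i)"
  by (induction S rule: finite_induct) (simp_all add: mult_monom monom_0 one_pCons)

lemma det_mat_monom:
  fixes C :: "nat \<Rightarrow> nat \<Rightarrow> 'a::comm_ring_1"
  assumes nz: "\<And>i j. i < r \<Longrightarrow> j < r \<Longrightarrow> C i j \<noteq> 0 \<Longrightarrow> i \<le> n j"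
  shows "det (mat r r (\<lambda>(i,j). monom (C i j) (n j - i))) =
    monom (det (mat r r (\<lambda>(i,j). C i j))) ((\<Sum>j<r. n j) - (\<Sum>i<r. i))"
proof -
  let ?E = "(\<Sum>j<r. n j) - (\<Sum>i<r. i)"
  have "(\<Prod>i=0..<r. monom (C i (p i)) (n (p i) - i)) = monom (\<Prod>i=0..<r. C i (p i)) ?E"
    if p: "p permutes {0..<r}" for p
  proof (cases "\<forall>i<r. C i (p i) \<noteq> 0")
    case True
    then have "i \<le> n (p i)" if "i \<in> {0..<r}" for i
      using nz p that by (simp add: permutes_in_image)
    then have "(\<Sum>i=0..<r. n (p i) - i) = (\<Sum>i=0..<r. n (p i)) - (\<Sum>i=0..<r. i)"
      by (intro sum_subtractf_nat) auto
    also have "(\<Sum>i=0..<r. n (p i)) = (\<Sum>j=0..<r. n j)"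
      using sum.permute[OF p, of n] by (simp add: comp_def)
    finally show ?thesis by (simp add: prod_monom atLeast0LessThan)
  next
    case False
    then obtain i where "i < r" "C i (p i) = 0" by auto
    then have "(\<Prod>i=0..<r. C i (p i)) = 0" by (intro prod_zero) auto
    then show ?thesis by (simp add: prod_monom)
  qed
  then have "det (mat r r (\<lambda>(i,j). monom (C i j) (n j - i))) =
      (\<Sum>p\<in>{p. p permutes {0..<r}}. monom (signof p * (\<Prod>i=0..<r. C i (p i))) ?E)"
    by (subst det_def'[of _ r])
      (auto intro!: sum.cong simp: of_int_poly smult_monom)
  also have "\<dots> = monom (det (mat r r (\<lambda>(i,j). C i j))) ?E"
    by (subst det_def'[of _ r]) (auto intro!: sum.cong prod.cong simp: monom_sum)
  finally show ?thesis .
qed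

lemma wronskian_monom:
  "wronskian r (\<lambda>j. monom (1::'a::field_char_0) (n j)) =
    monom (of_int (vandermonde r n)) ((\<Sum>j<r. n j) - (\<Sum>i<r. i))"
proof -
  define C where "C i j = (if i \<le> n j then inverse (fact (n j - i)) else (0::'a))" for i j
  define F where "F = (\<Prod>j<r. fact (n j) :: 'a)"
  have "F \<noteq> 0" by (simp add: F_def)
  have "of_int (vandermonde r n) = det (mat r r (\<lambda>(i,j). poly (newton_poly of_nat i) (of_nat (n j) :: 'a)))"
    by (simp add: det_eval_newton_poly vandermonde_def of_int_prod)
  also have "\<dots> = det (mat r r (\<lambda>(i,j). 1 * fact (n j) * mat r r (\<lambda>(i,j). C i j) $$ (i,j)))"
    by (rule arg_cong[where f = det], rule eq_matI)
      (auto simp: poly_newton_poly_of_nat C_def field_simps)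
  also have "\<dots> = F * det (mat r r (\<lambda>(i,j). C i j))"
    by (subst det_scale_rows_cols[where u = "\<lambda>_. 1"]) (simp_all add: F_def)
  finally have "of_int (vandermonde r n) = F * det (mat r r (\<lambda>(i,j). C i j))" .
  moreover have "toeplitz_cols (egf_coeff (\<lambda>n. monom 1 n)) r n = mat r r (\<lambda>(i,j). monom (C i j) (n j - i))"
    by (rule eq_matI) (auto simp: toeplitz_cols_def egf_coeff_monom C_def)
  moreover have "det (mat r r (\<lambda>(i,j). monom (C i j) (n j - i))) =
      monom (det (mat r r (\<lambda>(i,j). C i j))) ((\<Sum>j<r. n j) - (\<Sum>i<r. i))"
    by (rule det_mat_monom) (simp add: C_def split: if_splits)
  ultimately show ?thesis
    by (simp add: wronskian_of_appell[OF appell_monom] smult_monom F_def)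
qed

lemma wronskian_appell_monom:
  assumes "\<And>i j. i < j \<Longrightarrow> j < length lam \<Longrightarrow> part_seq lam i < part_seq lam j"
  shows "wronskian_appell (\<lambda>n. monom (1::'a::field_char_0) n) lam =
    monom 1 ((\<Sum>j<length lam. part_seq lam j) - (\<Sum>i<length lam. i))"
  using vandermonde_nonzero[OF assms] by (simp add: wronskian_appell_def wronskian_monom smult_monom)

text \<open>The constant is pinned down by the self-dual monomials \<open>x^n\<close>, for which
  \<open>A_lam = x^|lam|\<close>.\<close>
lemma wronskian_appell_conj_partition:
  fixes X Y :: "nat \<Rightarrow> 'a::field_char_0 poly"
  assumes X: "appell X" and Y: "appell Y" and dual: "dual_seqs (egf_coeff Y) (egf_coeff X)"
    and part: "is_partition lam"
  shows "wronskian_appell Y lam = wronskian_appell X (conj_partition lam)"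
proof -
  obtain c :: 'a where c: "\<And>X Y. appell X \<Longrightarrow> appell Y \<Longrightarrow> dual_seqs (egf_coeff Y) (egf_coeff X) \<Longrightarrow>
      wronskian_appell Y lam = smult c (wronskian_appell X (conj_partition lam))"
    using wronskian_appell_conj_proportional[OF part] by blast
  have "wronskian_appell (\<lambda>n. monom 1 n) lam =
      smult c (wronskian_appell (\<lambda>n. monom 1 n) (conj_partition lam))"
    by (rule c[OF appell_monom appell_monom dual_seqs_monom])
  then have "monom 1 ((\<Sum>j<length lam. part_seq lam j) - (\<Sum>i<length lam. i)) =
      monom c ((\<Sum>j<length (conj_partition lam). part_seq (conj_partition lam) j) -
        (\<Sum>i<length (conj_partition lam). i))"
    by (simp add: wronskian_appell_monom part_seq_strict_mono[OF part]
        part_seq_conj_strict_mono smult_monom)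
  then have "c = 1" by (simp add: monom_eq_iff')
  then show ?thesis using c[OF X Y dual] by simp
qed

section \<open>The dual Appell sequence\<close>

definition alt_egf :: "(nat \<Rightarrow> 'a::field_char_0 poly) \<Rightarrow> 'a poly fps" where
  "alt_egf A = Abs_fps (\<lambda>k. smult ((-1)^k) (egf_coeff A k))"

text \<open>\<open>\<Sum>\<^sub>k A*_k t^k / k! = 1 / (\<Sum>\<^sub>k A_k (-t)^k / k!) = e^(xt) / f_A(-t)\<close>;
  polynomials do not form a field, hence the right inverse.\<close>
definition dual_egf :: "(nat \<Rightarrow> 'a::field_char_0 poly) \<Rightarrow> 'a poly fps" where
  "dual_egf A = fps_right_inverse (alt_egf A) 1"

definition appell_star :: "(nat \<Rightarrow> 'a::field_char_0 poly) \<Rightarrow> nat \<Rightarrow> 'a poly" where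
  "appell_star A k = smult (fact k) (fps_nth (dual_egf A) k)"

lemma alt_egf_mult_dual_egf:
  assumes "appell A"
  shows "alt_egf A * dual_egf A = 1"
  unfolding dual_egf_def
  by (rule fps_right_inverse) (use assms in \<open>simp add: alt_egf_def egf_coeff_def appell_def\<close>)

lemma egf_coeff_appell_star: "egf_coeff (appell_star A) k = fps_nth (dual_egf A) k"
  by (simp add: egf_coeff_def appell_star_def)

lemma dual_seqs_appell_star:
  assumes "appell A"
  shows "dual_seqs (egf_coeff A) (egf_coeff (appell_star A))"
  unfolding dual_seqs_def
proof
  fix m
  have "fps_nth (alt_egf A * dual_egf A) m = (\<Sum>a\<le>m. (-1)^a * egf_coeff A a * egf_coeff (appell_star A) (m - a))"
    by (simp add: fps_mult_nth atLeast0AtMost alt_egf_def egf_coeff_appell_star minus_one_power_poly)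
  then show "(\<Sum>a\<le>m. (-1)^a * egf_coeff A a * egf_coeff (appell_star A) (m - a)) = (if m = 0 then 1 else 0)"
    using alt_egf_mult_dual_egf[OF assms] by simp
qed

definition fps_pderiv :: "'a::idom poly fps \<Rightarrow> 'a poly fps" where
  "fps_pderiv f = Abs_fps (\<lambda>n. pderiv (fps_nth f n))"

lemma fps_pderiv_mult: "fps_pderiv (f * g) = fps_pderiv f * g + f * fps_pderiv g"
proof (rule fps_ext)
  fix n
  have "fps_nth (fps_pderiv (f * g)) n = (\<Sum>i=0..n. pderiv (fps_nth f i * fps_nth g (n - i)))"
    using higher_pderiv_sum[of 1] by (simp add: fps_pderiv_def fps_mult_nth)
  also have "\<dots> = (\<Sum>i=0..n. pderiv (fps_nth f i) * fps_nth g (n - i) + fps_nth f i * pderiv (fps_nth g (n - i)))"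
    by (simp add: pderiv_mult ac_simps)
  also have "\<dots> = fps_nth (fps_pderiv f * g + f * fps_pderiv g) n"
    by (simp add: fps_pderiv_def fps_mult_nth sum.distrib)
  finally show "fps_nth (fps_pderiv (f * g)) n = fps_nth (fps_pderiv f * g + f * fps_pderiv g) n" .
qed

lemma fps_pderiv_alt_egf:
  assumes "appell A"
  shows "fps_pderiv (alt_egf A) = - (fps_X * alt_egf A)"
proof (rule fps_ext)
  fix n
  show "fps_nth (fps_pderiv (alt_egf A)) n = fps_nth (- (fps_X * alt_egf A)) n"
  proof (cases n)
    case 0
    then show ?thesis using assms by (simp add: fps_pderiv_def alt_egf_def egf_coeff_def appell_def)
  next
    case (Suc k)
    have "pderiv (A (Suc k)) = smult (of_nat (Suc k)) (A k)"
      using assms unfolding appell_def by (metis diff_Suc_1 le_add1 plus_1_eq_Suc)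
    then have "fps_nth (fps_pderiv (alt_egf A)) n =
        smult ((-1)^Suc k * (inverse (fact (Suc k)) * of_nat (Suc k))) (A k)"
      by (simp add: Suc fps_pderiv_def alt_egf_def egf_coeff_def pderiv_smult mult.assoc del: of_nat_Suc)
    also have "(-1)^Suc k * (inverse (fact (Suc k)) * of_nat (Suc k)) = - ((-1)^k * inverse (fact k) :: 'a)"
      by (simp add: field_simps del: of_nat_Suc)
    finally show ?thesis
      by (simp add: Suc alt_egf_def egf_coeff_def)
  qed
qed

lemma fps_pderiv_dual_egf:
  assumes "appell A"
  shows "fps_pderiv (dual_egf A) = fps_X * dual_egf A"
proof -
  let ?B = "alt_egf A" and ?E = "dual_egf A"
  have BE: "?B * ?E = 1" by (rule alt_egf_mult_dual_egf[OF assms])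
  have "fps_pderiv 1 = (0 :: 'a poly fps)" by (rule fps_ext) (simp add: fps_pderiv_def)
  then have "fps_pderiv (?B * ?E) = 0" by (simp add: BE)
  then have deriv: "?B * fps_pderiv ?E = fps_X * ?B * ?E"
    by (simp add: fps_pderiv_mult fps_pderiv_alt_egf[OF assms] add_eq_0_iff)
  have "fps_pderiv ?E = ?E * (?B * fps_pderiv ?E)"
    by (simp add: BE mult.assoc[symmetric] mult.commute[of ?E])
  also have "\<dots> = fps_X * ?E * (?B * ?E)"
    by (simp only: deriv ac_simps)
  finally show ?thesis by (simp add: BE)
qed

lemma appell_appell_star:
  assumes "appell A"
  shows "appell (appell_star A)"
  unfolding appell_def
proof (intro conjI allI impI)
  show "appell_star A 0 = 1" by (simp add: appell_star_def dual_egf_def)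
  fix n :: nat assume "n \<ge> 1"
  then obtain k where n: "n = Suc k" by (cases n) auto
  have "pderiv (fps_nth (dual_egf A) (Suc k)) = fps_nth (dual_egf A) k"
    using arg_cong[OF fps_pderiv_dual_egf[OF assms], of "\<lambda>f. fps_nth f (Suc k)"]
    by (simp add: fps_pderiv_def)
  then show "pderiv (appell_star A n) = smult (of_nat n) (appell_star A (n - 1))"
    by (simp add: n appell_star_def pderiv_smult smult_smult)
qed

lemma conj_partition_replicate_one:
  "conj_partition (replicate n 1) = (if n = 0 then [] else [n])"
proof -
  have "(max (1::nat) ^^ n) 0 = (if n = 0 then 0 else 1)"
    by (induction n) auto
  then show ?thesis by (auto simp: conj_partition_def filter_replicate)
qed

lemma wronskian_appell_Nil: "wronskian_appell A [] = 1"
  by (simp add: wronskian_appell_def wronskian_def vandermonde_def)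

lemma wronskian_appell_single: "wronskian_appell A [n] = A n"
  by (simp add: wronskian_appell_def wronskian_def vandermonde_def det_single part_seq_def)

lemma appell_dual_eq_appell_star:
  assumes "appell A"
  shows "appell_dual A = appell_star A"
proof
  fix n
  have "appell_dual A n = wronskian_appell (appell_star A) (conj_partition (replicate n 1))"
    unfolding appell_dual_def
    by (rule wronskian_appell_conj_partition[OF appell_appell_star[OF assms] assms dual_seqs_appell_star[OF assms]])
      (simp add: is_partition_def sorted_wrt_iff_nth_less)
  also have "\<dots> = appell_star A n"
  proof (cases "n = 0")
    case True
    then show ?thesis
      by (simp add: conj_partition_def wronskian_appell_Nil appell_star_def dual_egf_def)
  next
    case False
    then show ?thesis
      using conj_partition_replicate_one[of n] by (simp add: wronskian_appell_single)
  qed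
  finally show "appell_dual A n = appell_star A n" .
qed

lemma appell_egf_nth:
  assumes "appell_egf A f"
  shows "fps_nth f k = poly (egf_coeff A k) 0"
proof -
  have "egf_coeff A k = (\<Sum>i=0..k. monom (inverse (fact i)) i * [:fps_nth f (k - i):])"
    using arg_cong[OF conjunct2[OF assms[unfolded appell_egf_def]], of "\<lambda>g. fps_nth g k"]
    by (simp add: fps_mult_nth egf_coeff_def)
  then show ?thesis
    by (simp add: poly_0_coeff_0 coeff_sum coeff_monom_mult not_less sum.atLeast_Suc_atMost[of 0])
qed

lemma appell_egf_appell_star:
  assumes "appell A" and "appell_egf A fA" and "appell_egf (appell_star A) fAs"
  shows "fps_compose fA (- fps_X) * fAs = 1"
proof (rule fps_ext)
  fix m
  have "fps_nth (fps_compose fA (- fps_X) * fAs) m =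
      poly (\<Sum>a\<le>m. (-1)^a * egf_coeff A a * egf_coeff (appell_star A) (m - a)) 0"
    using assms(2,3) by (simp add: fps_mult_nth fps_compose_uminus' appell_egf_nth poly_sum atLeast0AtMost)
  then show "fps_nth (fps_compose fA (- fps_X) * fAs) m = fps_nth 1 m"
    using dual_seqs_appell_star[OF assms(1)] by (simp add: dual_seqs_def)
qed

theorem theorem5p5:
  fixes A :: "nat \<Rightarrow> 'a::field_char_0 poly"
  assumes "appell A"
  shows "appell (appell_dual A) \<and>
         (\<forall>lam. is_partition lam \<longrightarrow>
           wronskian_appell (appell_dual A) lam = wronskian_appell A (conj_partition lam)) \<and>
         (\<forall>fA fAs. appell_egf A fA \<and> appell_egf (appell_dual A) fAs \<longrightarrow>
           fAs = inverse (fps_compose fA (- fps_X)))"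
proof (intro conjI allI impI)
  have star: "appell_dual A = appell_star A"
    by (rule appell_dual_eq_appell_star[OF assms])
  show "appell (appell_dual A)"
    unfolding star by (rule appell_appell_star[OF assms])
  show "wronskian_appell (appell_dual A) lam = wronskian_appell A (conj_partition lam)"
    if "is_partition lam" for lam
    unfolding star
    by (rule wronskian_appell_conj_partition[OF assms appell_appell_star[OF assms]
          dual_seqs_sym[OF dual_seqs_appell_star[OF assms]] that])
  show "fAs = inverse (fps_compose fA (- fps_X))"
    if "appell_egf A fA \<and> appell_egf (appell_dual A) fAs" for fA fAs
    using that unfolding star
    by (intro fps_inverse_unique[symmetric] appell_egf_appell_star[OF assms]) simp_all
qed

end
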